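(* Let $M$ be a Riemann surface and $n\le4$. Then (i) every extended solution $\Phi:M\to\Omega_r\mathrm U(n)^{\mathbb R}$ of canonical type is $S^1$-invariant; (ii) in particular, every such extended solution satisfies $\Phi_\lambda\Phi_{-1}=\Phi_{-\lambda}$ for all $\lambda\in S^1$, and so the corresponding harmonic map $\varphi=\Phi_{-1}$ maps into a real Grassmannian or, when $n=2m$, into $\mathrm O(2m)/\mathrm U(m)$.
   Context: Vectors/matrices are written w.r.t. a null basis of $\mathbb C^n$ with bilinear form $(v,w)=\sum_jv_jw_{\bar j}$, $\bar j=n+1-j$; $\mathrm O(n,\mathbb C)$ preserves it. $\Omega_r\mathrm U(n)^{\mathbb R}$ is the set of loops $\Phi=\sum_{k=0}^r\lambda^k\Phi_k$ in $\mathrm U(n)$ (parameter $\lambda\in S^1$) with $\Phi(1)=I$ and $\Phi^T\Phi=\lambda^rI$ (transpose w.r.t. the bilinear form). An extended solution is a smooth map $\Phi$ from $M$ to based loops in $\mathrm U(n)$ with $\Phi^{-1}\partial_z\Phi=(1-\lambda^{-1})A_z$ locally; $\Phi_\lambda(z)=\Phi(z)(\lambda)$; $S^1$-invariant means $\Phi_{\lambda\mu}=\Phi_\lambda\Phi_\mu$. A canonical element of $\Omega_r\mathrm U(n)^{\mathbb R}$ is $\xi=\mathrm i\,\mathrm{diag}(\xi_1,\dots,\xi_n)$ with integers $\xi_i-\xi_{i+1}\in\{0,1\}$, $\xi_1=r$, $\xi_n=0$, $\xi_{\bar i}=r-\xi_i$ (and $\xi_{n/2-1}=\xi_{n/2}$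 if $r$ odd); $\gamma_\xi=\mathrm{diag}(\lambda^{\xi_i})$. $\Phi$ is of canonical type if $\Phi=[A\gamma_\xi]$ for such a $\xi$ and a meromorphic $A$ with values in matrices $(a_{ij})$ of polynomials in $\lambda$ with $a_{ij}=\delta_{ij}$ if $\xi_i\le\xi_j$, $\deg a_{ij}\le\xi_i-\xi_j-1$ otherwise, $A(\lambda)\in\mathrm O(n,\mathbb C)$; $[\Psi]$ is the based unitary factor of $\Psi=\Phi B$ with $B$ holomorphic on the unit disc. "Maps into a real Grassmannian" means that (for $r$ even) $\pm\Phi_{-1}$ has the form $\pi_V-\pi_V^\perp$ for a real subbundle $V$; "into $\mathrm O(2m)/\mathrm U(m)$" means (for $r$ odd) $\pm\mathrm i\Phi_{-1}$ is an orthogonal complex structure on $\mathbb R^{2m}$ at each point. *)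

theory Defs
  imports "HOL-Analysis.Analysis" "HOL-Complex_Analysis.Complex_Analysis"
begin

text \<open>Matrices are functions nat => nat => complex, indexed by 1..n
  (entries outside {1..n} x {1..n} are irrelevant). The bilinear form is
  (v,w) = sum_j v_j w_(n+1-j).\<close>

type_synonym cmat = "nat \<Rightarrow> nat \<Rightarrow> complex"

definition idm :: cmat where
  "idm i j = (if i = j then 1 else 0)"

definition mmul :: "nat \<Rightarrow> cmat \<Rightarrow> cmat \<Rightarrow> cmat" where
  "mmul n A B = (\<lambda>i j. \<Sum>k\<in>{1..n}. A i k * B k j)"

definition msc :: "complex \<Rightarrow> cmat \<Rightarrow> cmat" where
  "msc c A = (\<lambda>i j. c * A i j)"

definition meq :: "nat \<Rightarrow> cmat \<Rightarrow> cmat \<Rightarrow> bool" where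
  "meq n A B \<longleftrightarrow> (\<forall>i\<in>{1..n}. \<forall>j\<in>{1..n}. A i j = B i j)"

definition ctr :: "cmat \<Rightarrow> cmat" where
  "ctr A = (\<lambda>i j. cnj (A j i))"

text \<open>transpose with respect to the bilinear form: (A v, w) = (v, A^T w)\<close>
definition btr :: "nat \<Rightarrow> cmat \<Rightarrow> cmat" where
  "btr n A = (\<lambda>i j. A (n + 1 - j) (n + 1 - i))"

definition unitary_mat :: "nat \<Rightarrow> cmat \<Rightarrow> bool" where
  "unitary_mat n A \<longleftrightarrow> meq n (mmul n (ctr A) A) idm"

text \<open>A matrix is real iff it commutes with the real structure
  c(v)_j = conj(v_(n+1-j)) (the real form on which the bilinear form is the
  Euclidean inner product).\<close>
definition real_mat :: "nat \<Rightarrow> cmat \<Rightarrow> bool" where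
  "real_mat n A \<longleftrightarrow> (\<forall>i\<in>{1..n}. \<forall>j\<in>{1..n}. cnj (A (n + 1 - i) (n + 1 - j)) = A i j)"

text \<open>Omega_r U(n)^R: polynomial loops of degree <= r, unitary on S^1, based
  (L 1 = I) and with L^T L = lambda^r I.  A loop is a function of lambda,
  only its values on the unit circle matter.\<close>
definition in_OmegaR :: "nat \<Rightarrow> nat \<Rightarrow> (complex \<Rightarrow> cmat) \<Rightarrow> bool" where
  "in_OmegaR n r L \<longleftrightarrow>
     (\<exists>C :: nat \<Rightarrow> cmat. \<forall>l\<in>sphere 0 1. meq n (L l) (\<lambda>i j. \<Sum>k\<le>r. l ^ k * C k i j)) \<and>
     (\<forall>l\<in>sphere 0 1. unitary_mat n (L l)) \<and>
     meq n (L 1) idm \<and>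
     (\<forall>l\<in>sphere 0 1. meq n (mmul n (btr n (L l)) (L l)) (msc (l ^ r) idm))"

text \<open>Real C-infinity functions on an open set M of the complex plane
  (all iterated real partial derivatives exist).\<close>
coinductive cinf :: "complex set \<Rightarrow> (complex \<Rightarrow> complex) \<Rightarrow> bool" for M where
  "\<lbrakk>\<forall>z\<in>M. (f has_derivative (\<lambda>h. of_real (Re h) * fx z + of_real (Im h) * fy z)) (at z);
    cinf M fx; cinf M fy\<rbrakk> \<Longrightarrow> cinf M f"

definition dz :: "(complex \<Rightarrow> complex) \<Rightarrow> complex \<Rightarrow> complex" where
  "dz f z = (frechet_derivative f (at z) 1 - \<i> * frechet_derivative f (at z) \<i>) / 2"

text \<open>Extended solution Phi : M -> Omega_r U(n)^R; Phi z l is the value of the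
  loop Phi(z) at l.\<close>
definition ext_sol :: "nat \<Rightarrow> nat \<Rightarrow> complex set \<Rightarrow> (complex \<Rightarrow> complex \<Rightarrow> cmat) \<Rightarrow> bool" where
  "ext_sol n r M Phi \<longleftrightarrow>
     (\<forall>z\<in>M. in_OmegaR n r (Phi z)) \<and>
     (\<forall>l\<in>sphere 0 1. \<forall>i\<in>{1..n}. \<forall>j\<in>{1..n}. cinf M (\<lambda>z. Phi z l i j)) \<and>
     (\<forall>z\<in>M. \<exists>Az :: cmat. \<forall>l\<in>sphere 0 1.
        meq n (\<lambda>i j. dz (\<lambda>w. Phi w l i j) z) (msc (1 - inverse l) (mmul n (Phi z l) Az)))"

text \<open>Canonical elements xi = i diag(xi_1,...,xi_n), indices 1..n.\<close>
definition canonical_xi :: "nat \<Rightarrow> nat \<Rightarrow> (nat \<Rightarrow> int) \<Rightarrow> bool" where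
  "canonical_xi n r xi \<longleftrightarrow>
     (\<forall>i\<in>{1..<n}. xi i - xi (i + 1) \<in> {0, 1}) \<and>
     xi 1 = int r \<and> xi n = 0 \<and>
     (\<forall>i\<in>{1..n}. xi (n + 1 - i) = int r - xi i) \<and>
     (odd r \<longrightarrow> 1 \<le> n div 2 - 1 \<longrightarrow> xi (n div 2 - 1) = xi (n div 2))"

definition gamma_xi :: "(nat \<Rightarrow> int) \<Rightarrow> complex \<Rightarrow> cmat" where
  "gamma_xi xi l = (\<lambda>i j. if i = j then l ^ nat (xi i) else 0)"

definition Amat :: "(nat \<Rightarrow> int) \<Rightarrow> (nat \<Rightarrow> nat \<Rightarrow> nat \<Rightarrow> complex \<Rightarrow> complex) \<Rightarrow> complex \<Rightarrow> complex \<Rightarrow> cmat" where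
  "Amat xi c z l = (\<lambda>i j. if xi i \<le> xi j then idm i j
                          else (\<Sum>k<nat (xi i - xi j). c i j k z * l ^ k))"

text \<open>[Psi] = Phi : Psi = Phi B on S^1 with B holomorphic on the unit disc
  (continuous up to the boundary) with values in GL(n,C).\<close>
definition based_unitary_factor :: "nat \<Rightarrow> (complex \<Rightarrow> cmat) \<Rightarrow> (complex \<Rightarrow> cmat) \<Rightarrow> bool" where
  "based_unitary_factor n Phi Psi \<longleftrightarrow>
     (\<exists>B :: complex \<Rightarrow> cmat.
        (\<forall>i\<in>{1..n}. \<forall>j\<in>{1..n}. (\<lambda>l. B l i j) holomorphic_on ball 0 1 \<and>
                                 continuous_on (cball 0 1) (\<lambda>l. B l i j)) \<and>
        (\<forall>l\<in>cball 0 1. \<exists>C. meq n (mmul n (B l) C) idm) \<and>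
        (\<forall>l\<in>sphere 0 1. meq n (Psi l) (mmul n (Phi l) (B l))))"

definition canonical_type :: "nat \<Rightarrow> nat \<Rightarrow> complex set \<Rightarrow> (complex \<Rightarrow> complex \<Rightarrow> cmat) \<Rightarrow> bool" where
  "canonical_type n r M Phi \<longleftrightarrow>
     (\<exists>xi c. canonical_xi n r xi \<and>
        (\<forall>i\<in>{1..n}. \<forall>j\<in>{1..n}. \<forall>k<nat (xi i - xi j). c i j k meromorphic_on M) \<and>
        (\<forall>z\<in>M. (\<forall>i\<in>{1..n}. \<forall>j\<in>{1..n}. \<forall>k<nat (xi i - xi j). c i j k analytic_on {z}) \<longrightarrow>
           (\<forall>l. meq n (mmul n (btr n (Amat xi c z l)) (Amat xi c z l)) idm) \<and>
           based_unitary_factor n (Phi z) (\<lambda>l. mmul n (Amat xi c z l) (gamma_xi xi l))))"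

definition S1_invariant :: "nat \<Rightarrow> complex set \<Rightarrow> (complex \<Rightarrow> complex \<Rightarrow> cmat) \<Rightarrow> bool" where
  "S1_invariant n M Phi \<longleftrightarrow>
     (\<forall>z\<in>M. \<forall>l\<in>sphere 0 1. \<forall>m\<in>sphere 0 1. meq n (Phi z (l * m)) (mmul n (Phi z l) (Phi z m)))"

text \<open>pm X = pi_V - pi_V^perp for a real subspace V (P = pi_V Hermitian
  projection commuting with the real structure).\<close>
definition real_grassmannian_pt :: "nat \<Rightarrow> cmat \<Rightarrow> bool" where
  "real_grassmannian_pt n X \<longleftrightarrow>
     (\<exists>s\<in>{1, -1}. \<exists>P. meq n (mmul n P P) P \<and> meq n (ctr P) P \<and> real_mat n P \<and>
        meq n (msc s X) (\<lambda>i j. 2 * P i j - idm i j))"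

definition orth_cx_structure_pt :: "nat \<Rightarrow> cmat \<Rightarrow> bool" where
  "orth_cx_structure_pt n X \<longleftrightarrow>
     (\<exists>s\<in>{1, -1}. let J = msc (s * \<i>) X in
        real_mat n J \<and> meq n (mmul n J J) (msc (-1) idm) \<and> meq n (mmul n (btr n J) J) idm)"

end

theory Submission
  imports Defs
begin

(* For n <= 4 a canonical xi has xi_i - xi_j >= 2 only for (i, j) = (1, n); since the last
   column of A is isotropic for the bilinear form, a_1n is then constant too, so A does not
   depend on lambda.  Where A is holomorphic, Phi B = A gamma_xi and
   gamma_xi(lambda mu) = gamma_xi(lambda) gamma_xi(mu) give
   Phi(lambda mu) B(lambda mu) = Phi(lambda) B(lambda) gamma_xi(mu).  Hence
   Phi(lambda)^* Phi(lambda mu) is a unitary Laurent polynomial in lambda which, together with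
   its adjoint, extends holomorphically into the unit disc; so it is constant, equal to Phi(mu),
   and Phi is S^1-invariant.  Continuity in z carries this over the poles of A.  Finally
   Phi_(-1) is a unitary involution, hence Hermitian, with bilinear transpose (-1)^r Phi_(-1):
   this is the real Grassmannian resp. orthogonal complex structure condition, and r odd forces
   n even through the symmetry xi_(n+1-i) = r - xi_i. *)

lemma meq_refl [simp]: "meq n A A"
  by (simp add: meq_def)

lemma meq_sym: "meq n A B \<Longrightarrow> meq n B A"
  by (simp add: meq_def)

lemma meq_trans [trans]: "meq n A B \<Longrightarrow> meq n B C \<Longrightarrow> meq n A C"
  by (simp add: meq_def)

lemma mmul_assoc: "mmul n (mmul n A B) C = mmul n A (mmul n B C)"
  unfolding mmul_def
  by (auto simp: fun_eq_iff sum_distrib_left sum_distrib_right mult.assoc intro: sum.swap)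

lemma mmul_idm_left: "meq n (mmul n idm A) A"
  by (simp add: meq_def mmul_def idm_def if_distrib[where f="\<lambda>x. x * _"] cong: if_cong)

lemma mmul_idm_right: "meq n (mmul n A idm) A"
  by (simp add: meq_def mmul_def idm_def if_distrib[where f="\<lambda>x. _ * x"] cong: if_cong)

lemma mmul_cong: "meq n A A' \<Longrightarrow> meq n B B' \<Longrightarrow> meq n (mmul n A B) (mmul n A' B')"
  by (simp add: meq_def mmul_def)

lemma mmul_msc_left: "mmul n (msc c A) B = msc c (mmul n A B)"
  by (simp add: mmul_def msc_def sum_distrib_left mult.assoc fun_eq_iff)

lemma mmul_msc_right: "mmul n A (msc c B) = msc c (mmul n A B)"
  by (simp add: mmul_def msc_def sum_distrib_left mult_ac fun_eq_iff)

lemma msc_msc [simp]: "msc a (msc b A) = msc (a * b) A"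
  by (simp add: msc_def mult.assoc fun_eq_iff)

lemma msc_cong: "meq n A B \<Longrightarrow> meq n (msc c A) (msc c B)"
  by (simp add: meq_def msc_def)

lemma ctr_ctr [simp]: "ctr (ctr A) = A"
  by (simp add: ctr_def)

lemma ctr_idm [simp]: "ctr idm = idm"
  by (simp add: ctr_def idm_def fun_eq_iff)

lemma ctr_cong: "meq n A B \<Longrightarrow> meq n (ctr A) (ctr B)"
  by (simp add: meq_def ctr_def)

lemma ctr_mmul: "ctr (mmul n A B) = mmul n (ctr B) (ctr A)"
  by (simp add: ctr_def mmul_def mult.commute fun_eq_iff)

lemma btr_msc: "btr n (msc c A) = msc c (btr n A)"
  by (simp add: btr_def msc_def)

lemma ctr_msc: "ctr (msc c A) = msc (cnj c) (ctr A)"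
  by (simp add: ctr_def msc_def)

lemma msc_1 [simp]: "msc 1 A = A"
  by (simp add: msc_def)

lemma real_mat_iff_meq: "real_mat n A \<longleftrightarrow> meq n (ctr (btr n A)) A"
  by (auto simp: real_mat_def meq_def ctr_def btr_def)

lemma left_inverse_eq_right_inverse:
  assumes "meq n (mmul n A B) idm" and "meq n (mmul n B D) idm"
  shows "meq n A D"
proof -
  have "meq n A (mmul n A (mmul n B D))"
    using meq_trans[OF meq_sym[OF mmul_idm_right] mmul_cong[OF meq_refl meq_sym[OF assms(2)]]] .
  also have "mmul n A (mmul n B D) = mmul n (mmul n A B) D"
    by (simp add: mmul_assoc)
  also have "meq n \<dots> (mmul n idm D)"
    using assms(1) by (simp add: mmul_cong)
  also have "meq n \<dots> D"
    by (rule mmul_idm_left)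
  finally show ?thesis .
qed

lemma meq_0_if_mmul_right_invertible:
  assumes "meq n (mmul n V X) (\<lambda>_ _. 0)" and "meq n (mmul n X C) idm"
  shows "meq n V (\<lambda>_ _. 0)"
proof -
  have "meq n V (mmul n V idm)"
    by (rule meq_sym[OF mmul_idm_right])
  also have "meq n \<dots> (mmul n V (mmul n X C))"
    by (rule mmul_cong[OF meq_refl meq_sym[OF assms(2)]])
  also have "\<dots> = mmul n (mmul n V X) C"
    by (simp add: mmul_assoc)
  also have "meq n \<dots> (mmul n (\<lambda>_ _. 0) C)"
    by (rule mmul_cong[OF assms(1) meq_refl])
  also have "mmul n (\<lambda>_ _. 0) C = (\<lambda>_ _. 0)"
    by (simp add: mmul_def fun_eq_iff)
  finally show ?thesis .
qed

section \<open>Polynomials on the unit circle\<close>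

lemma unit_sphere_mult_cnj: "l \<in> sphere 0 1 \<Longrightarrow> l * cnj l = 1"
  using complex_norm_square[of l] by simp

lemma infinite_unit_sphere: "infinite (sphere (0::complex) 1)"
proof
  assume "finite (sphere (0::complex) 1)"
  moreover have "connected (sphere (0::complex) 1)"
    by (rule connected_sphere) auto
  ultimately have "sphere (0::complex) 1 = {} \<or> (\<exists>a. sphere (0::complex) 1 = {a})"
    using connected_finite_iff_sing by blast
  moreover have "1 \<in> sphere (0::complex) 1" "-1 \<in> sphere (0::complex) 1"
    by auto
  ultimately show False
    by (metis empty_iff singletonD one_neq_neg_one)
qed

lemma poly_eq_if_eq_on_unit_sphere:
  fixes p q :: "complex poly"
  assumes "\<forall>l\<in>sphere 0 1. poly p l = poly q l"
  shows "p = q"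
proof (rule ccontr)
  assume "p \<noteq> q"
  then have "finite {x. poly (p - q) x = 0}"
    by (intro poly_roots_finite) simp
  moreover have "sphere 0 1 \<subseteq> {x. poly (p - q) x = 0}"
    using assms by auto
  ultimately show False
    using infinite_unit_sphere finite_subset by blast
qed

lemma poly_eq_power_mult_poly_shift:
  fixes p :: "complex poly"
  assumes "\<forall>m<k. coeff p m = 0"
  shows "poly p l = l ^ k * poly (poly_shift k p) l"
proof -
  have "p = monom 1 k * poly_shift k p"
    using assms by (auto simp: poly_eq_iff coeff_monom_mult coeff_poly_shift not_le)
  then show ?thesis
    by (metis poly_monom poly_mult mult_1)
qed

definition conj_reflect :: "nat \<Rightarrow> complex poly \<Rightarrow> complex poly" where
  "conj_reflect N p = (\<Sum>k\<le>N. monom (cnj (coeff p k)) (N - k))"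

lemma degree_conj_reflect: "degree (conj_reflect N p) \<le> N"
  unfolding conj_reflect_def
  by (intro degree_sum_le) (auto intro: order.trans[OF degree_monom_le])

lemma coeff_conj_reflect:
  "coeff (conj_reflect N p) k = (if k \<le> N then cnj (coeff p (N - k)) else 0)"
proof -
  have "coeff (conj_reflect N p) k = (\<Sum>m\<le>N. if m = N - k \<and> k \<le> N then cnj (coeff p m) else 0)"
    unfolding conj_reflect_def coeff_sum coeff_monom by (intro sum.cong) auto
  then show ?thesis
    by (simp add: sum.If_cases)
qed

lemma poly_conj_reflect:
  fixes p :: "complex poly"
  assumes "degree p \<le> N" and l: "l \<in> sphere 0 1"
  shows "poly (conj_reflect N p) l = l ^ N * cnj (poly p l)"
proof -
  have "poly (conj_reflect N p) l = (\<Sum>k\<le>N. l ^ N * (cnj (coeff p k) * cnj l ^ k))"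
    unfolding conj_reflect_def poly_sum poly_monom
  proof (intro sum.cong refl)
    fix k assume "k \<in> {..N}"
    then have "l ^ N * cnj l ^ k = l ^ (N - k) * (l * cnj l) ^ k"
      by (simp add: power_mult_distrib mult.assoc flip: power_add)
    then show "cnj (coeff p k) * l ^ (N - k) = l ^ N * (cnj (coeff p k) * cnj l ^ k)"
      using unit_sphere_mult_cnj[OF l] by (simp add: mult.left_commute)
  qed
  also have "\<dots> = l ^ N * cnj (poly (\<Sum>k\<le>N. monom (coeff p k) k) l)"
    by (simp add: poly_sum poly_monom sum_distrib_left)
  finally show ?thesis
    using poly_as_sum_of_monoms'[OF assms(1)] by simp
qed

lemma poly_eq_middle_monom_if_low_coeffs_vanish:
  fixes p :: "complex poly"
  assumes deg: "degree p \<le> 2 * r" and low: "\<forall>k<r. coeff p k = 0"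
    and low_reflect: "\<forall>k<r. coeff (conj_reflect (2 * r) p) k = 0"
  shows "poly p l = coeff p r * l ^ r"
proof -
  have "coeff p k = 0" if k: "k \<noteq> r" for k
  proof -
    consider "k < r" | "r < k" "k \<le> 2 * r" | "2 * r < k"
      using k by linarith
    then show ?thesis
    proof cases
      case 2
      then have "coeff (conj_reflect (2 * r) p) (2 * r - k) = cnj (coeff p k)"
        by (simp add: coeff_conj_reflect)
      then show ?thesis
        using low_reflect 2 by simp
    next
      case 3
      then show ?thesis
        using deg by (intro coeff_eq_0) simp
    qed (use low in blast)
  qed
  then have "p = monom (coeff p r) r"
    by (auto simp: poly_eq_iff coeff_monom)
  then show ?thesis
    by (metis poly_monom)
qed

section \<open>Rigidity of unitary polynomial loops\<close>

definition holomorphic_on_disc :: "nat \<Rightarrow> (complex \<Rightarrow> cmat) \<Rightarrow> bool" where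
  "holomorphic_on_disc n X \<longleftrightarrow> (\<forall>i\<in>{1..n}. \<forall>j\<in>{1..n}.
     (\<lambda>l. X l i j) holomorphic_on ball 0 1 \<and> continuous_on (cball 0 1) (\<lambda>l. X l i j))"

lemma holomorphic_on_disc_rotate:
  assumes "holomorphic_on_disc n X" and "\<mu> \<in> sphere 0 1"
  shows "holomorphic_on_disc n (\<lambda>l. X (l * \<mu>))"
  unfolding holomorphic_on_disc_def
proof (intro ballI conjI)
  fix i j assume ij: "i \<in> {1..n}" "j \<in> {1..n}"
  have hol: "(\<lambda>l. X l i j) holomorphic_on ball 0 1" and cont: "continuous_on (cball 0 1) (\<lambda>l. X l i j)"
    using assms(1) ij by (auto simp: holomorphic_on_disc_def)
  have ball: "(\<lambda>l. l * \<mu>) ` ball 0 1 \<subseteq> ball 0 1"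
    and cball: "(\<lambda>l. l * \<mu>) ` cball 0 1 \<subseteq> cball 0 1"
    using assms(2) by (auto simp: norm_mult)
  have "((\<lambda>l. X l i j) \<circ> (\<lambda>l. l * \<mu>)) holomorphic_on ball 0 1"
    by (rule holomorphic_on_compose_gen[OF _ hol ball]) (auto intro!: holomorphic_intros)
  then show "(\<lambda>l. X (l * \<mu>) i j) holomorphic_on ball 0 1"
    by (simp add: o_def)
  show "continuous_on (cball 0 1) (\<lambda>l. X (l * \<mu>) i j)"
    by (rule continuous_on_compose2[OF cont _ cball]) (auto intro!: continuous_intros)
qed

lemma holomorphic_on_disc_mmul_const:
  assumes "holomorphic_on_disc n X"
  shows "holomorphic_on_disc n (\<lambda>l. mmul n (X l) C)"
  using assms unfolding holomorphic_on_disc_def mmul_def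
  by (auto intro!: holomorphic_intros continuous_intros)

lemma vanishing_on_unit_sphere_imp_vanishing_at_0:
  fixes g :: "complex \<Rightarrow> complex"
  assumes "g holomorphic_on ball 0 1" "continuous_on (cball 0 1) g" "\<forall>l\<in>sphere 0 1. g l = 0"
  shows "g 0 = 0"
proof -
  have "norm (g 0) \<le> 0"
    by (rule maximum_modulus_frontier[of g "ball 0 1"]) (use assms in auto)
  then show ?thesis
    by simp
qed

lemma low_coeffs_eq_0_of_disc_factorization:
  fixes R :: "nat \<Rightarrow> nat \<Rightarrow> complex poly"
  assumes X: "holomorphic_on_disc n X" and Y: "holomorphic_on_disc n Y"
    and inv: "meq n (mmul n (X 0) C) idm"
    and eq: "\<forall>l\<in>sphere 0 1. meq n (mmul n (\<lambda>i j. poly (R i j) l) (X l)) (msc (l ^ r) (Y l))"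
  shows "k < r \<Longrightarrow> \<forall>i\<in>{1..n}. \<forall>q\<in>{1..n}. coeff (R i q) k = 0"
proof (induction k rule: less_induct)
  case (less k)
  have row_X0: "(\<Sum>p\<in>{1..n}. coeff (R i p) k * X 0 p j) = 0"
    if ij: "i \<in> {1..n}" "j \<in> {1..n}" for i j
  proof -
    \<comment> \<open>Entry \<open>(i, j)\<close> of \<open>(R X - \<lambda>\<^sup>r Y) / \<lambda>\<^sup>k\<close>; it vanishes on the circle.\<close>
    define g where
      "g l = (\<Sum>p\<in>{1..n}. poly (poly_shift k (R i p)) l * X l p j) - l ^ (r - k) * Y l i j" for l
    have "g holomorphic_on ball 0 1" "continuous_on (cball 0 1) g"
      unfolding g_def using X Y ij unfolding holomorphic_on_disc_def
      by (auto intro!: holomorphic_intros continuous_intros)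
    moreover have "\<forall>l\<in>sphere 0 1. g l = 0"
    proof
      fix l :: complex assume l: "l \<in> sphere 0 1"
      have "l ^ k * g l = (\<Sum>p\<in>{1..n}. poly (R i p) l * X l p j) - l ^ r * Y l i j"
        using poly_eq_power_mult_poly_shift[of k] less ij
        by (simp add: g_def sum_distrib_left right_diff_distrib mult.assoc flip: power_add)
      also have "\<dots> = 0"
        using eq l ij by (simp add: meq_def mmul_def msc_def)
      finally show "g l = 0"
        using l by auto
    qed
    ultimately have "g 0 = 0"
      by (rule vanishing_on_unit_sphere_imp_vanishing_at_0)
    then show ?thesis
      using less.prems by (simp add: g_def poly_0_coeff_0 coeff_poly_shift)
  qed
  show ?case
  proof (intro ballI)
    fix i q assume "i \<in> {1..n}" "q \<in> {1..n}"
    then have "meq n (mmul n (\<lambda>_ p. coeff (R i p) k) (X 0)) (\<lambda>_ _. 0)"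
      using row_X0 by (simp add: meq_def mmul_def)
    with \<open>q \<in> {1..n}\<close> show "coeff (R i q) k = 0"
      using meq_0_if_mmul_right_invertible[OF _ inv] by (fastforce simp: meq_def)
  qed
qed

definition polynomial_loop :: "nat \<Rightarrow> nat \<Rightarrow> (complex \<Rightarrow> cmat) \<Rightarrow> bool" where
  "polynomial_loop n r L \<longleftrightarrow> (\<exists>Lp :: nat \<Rightarrow> nat \<Rightarrow> complex poly. \<forall>i\<in>{1..n}. \<forall>j\<in>{1..n}.
     degree (Lp i j) \<le> r \<and> (\<forall>l\<in>sphere 0 1. L l i j = poly (Lp i j) l))"

lemma polynomial_loopI:
  assumes "\<forall>l\<in>sphere 0 1. meq n (L l) (\<lambda>i j. \<Sum>k\<le>r. l ^ k * C k i j)"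
  shows "polynomial_loop n r L"
  unfolding polynomial_loop_def
proof (intro exI[of _ "\<lambda>i j. \<Sum>k\<le>r. monom (C k i j) k"] ballI conjI)
  fix i j assume ij: "i \<in> {1..n}" "j \<in> {1..n}"
  show "degree (\<Sum>k\<le>r. monom (C k i j) k) \<le> r"
    by (intro degree_sum_le) (auto intro: order.trans[OF degree_monom_le])
  show "L l i j = poly (\<Sum>k\<le>r. monom (C k i j) k) l" if "l \<in> sphere 0 1" for l
    using assms that ij by (simp add: meq_def poly_sum poly_monom mult.commute)
qed

lemma polynomial_loop_rotate:
  assumes "polynomial_loop n r L" and \<mu>: "\<mu> \<in> sphere 0 1"
  shows "polynomial_loop n r (\<lambda>l. L (l * \<mu>))"
proof -
  obtain Lp where Lp: "\<forall>i\<in>{1..n}. \<forall>j\<in>{1..n}.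
      degree (Lp i j) \<le> r \<and> (\<forall>l\<in>sphere 0 1. L l i j = poly (Lp i j) l)"
    using assms(1) unfolding polynomial_loop_def by blast
  show ?thesis
    unfolding polynomial_loop_def
  proof (intro exI[of _ "\<lambda>i j. pcompose (Lp i j) [:0, \<mu>:]"] ballI conjI)
    fix i j assume ij: "i \<in> {1..n}" "j \<in> {1..n}"
    have "degree [:0, \<mu>:] \<le> 1"
      by (simp add: degree_pCons_eq_if)
    then have "degree (pcompose (Lp i j) [:0, \<mu>:]) \<le> degree (Lp i j)"
      using degree_pcompose_le[of "Lp i j" "[:0, \<mu>:]"]
      by (metis mult.right_neutral mult_le_mono2 order_trans)
    then show "degree (pcompose (Lp i j) [:0, \<mu>:]) \<le> r"
      using Lp ij by fastforce
    show "L (l * \<mu>) i j = poly (pcompose (Lp i j) [:0, \<mu>:]) l" if "l \<in> sphere 0 1" for l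
      using Lp ij that \<mu> by (simp add: poly_pcompose norm_mult mult.commute)
  qed
qed

lemma polynomial_loop_adjoint_mult:
  assumes "polynomial_loop n r P" and "polynomial_loop n r Q"
  obtains R where "\<forall>i\<in>{1..n}. \<forall>j\<in>{1..n}. degree (R i j) \<le> 2 * r"
    and "\<forall>l\<in>sphere 0 1. \<forall>i\<in>{1..n}. \<forall>j\<in>{1..n}. poly (R i j) l = l ^ r * mmul n (ctr (Q l)) (P l) i j"
proof -
  obtain Pp where Pp: "\<forall>i\<in>{1..n}. \<forall>j\<in>{1..n}.
      degree (Pp i j) \<le> r \<and> (\<forall>l\<in>sphere 0 1. P l i j = poly (Pp i j) l)"
    using assms(1) unfolding polynomial_loop_def by blast
  obtain Qp where Qp: "\<forall>i\<in>{1..n}. \<forall>j\<in>{1..n}.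
      degree (Qp i j) \<le> r \<and> (\<forall>l\<in>sphere 0 1. Q l i j = poly (Qp i j) l)"
    using assms(2) unfolding polynomial_loop_def by blast
  define R where "R i j = (\<Sum>q\<in>{1..n}. conj_reflect r (Qp q i) * Pp q j)" for i j
  show ?thesis
  proof
    show "\<forall>i\<in>{1..n}. \<forall>j\<in>{1..n}. degree (R i j) \<le> 2 * r"
      unfolding R_def using Pp degree_conj_reflect[of r]
      by (auto intro!: degree_sum_le order.trans[OF degree_mult_le] simp: mult_2 add_mono)
    show "\<forall>l\<in>sphere 0 1. \<forall>i\<in>{1..n}. \<forall>j\<in>{1..n}. poly (R i j) l = l ^ r * mmul n (ctr (Q l)) (P l) i j"
      using Pp Qp by (auto simp: R_def poly_sum poly_conj_reflect mmul_def ctr_def sum_distrib_left mult.assoc)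
  qed
qed

lemma low_coeffs_eq_0_of_unitary_factorization:
  assumes Q: "\<forall>l\<in>sphere 0 1. unitary_mat n (Q l)"
    and X: "holomorphic_on_disc n X" "meq n (mmul n (X 0) C) idm" and Y: "holomorphic_on_disc n Y"
    and PX_QY: "\<forall>l\<in>sphere 0 1. meq n (mmul n (P l) (X l)) (mmul n (Q l) (Y l))"
    and R: "\<forall>l\<in>sphere 0 1. \<forall>i\<in>{1..n}. \<forall>j\<in>{1..n}. poly (R i j) l = l ^ r * mmul n (ctr (Q l)) (P l) i j"
  shows "k < r \<Longrightarrow> \<forall>i\<in>{1..n}. \<forall>j\<in>{1..n}. coeff (R i j) k = 0"
proof (rule low_coeffs_eq_0_of_disc_factorization[OF X(1) Y X(2)], intro ballI)
  fix l :: complex assume l: "l \<in> sphere 0 1"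
  have "meq n (\<lambda>i j. poly (R i j) l) (msc (l ^ r) (mmul n (ctr (Q l)) (P l)))"
    using R l by (simp add: meq_def msc_def)
  then have "meq n (mmul n (\<lambda>i j. poly (R i j) l) (X l)) (msc (l ^ r) (mmul n (ctr (Q l)) (mmul n (P l) (X l))))"
    using mmul_cong[OF _ meq_refl] by (fastforce simp: mmul_msc_left mmul_assoc)
  also have "meq n \<dots> (msc (l ^ r) (mmul n (mmul n (ctr (Q l)) (Q l)) (Y l)))"
    using PX_QY l by (simp add: msc_cong mmul_cong mmul_assoc)
  also have "meq n \<dots> (msc (l ^ r) (mmul n idm (Y l)))"
    using Q l by (simp add: msc_cong mmul_cong unitary_mat_def)
  also have "meq n \<dots> (msc (l ^ r) (Y l))"
    by (simp add: msc_cong mmul_idm_left)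
  finally show "meq n (mmul n (\<lambda>i j. poly (R i j) l) (X l)) (msc (l ^ r) (Y l))" .
qed

lemma unitary_polynomial_loops_rigid:
  assumes P: "polynomial_loop n r P" "\<forall>l\<in>sphere 0 1. unitary_mat n (P l)"
    and Q: "polynomial_loop n r Q" "\<forall>l\<in>sphere 0 1. unitary_mat n (Q l)"
    and X: "holomorphic_on_disc n X" "meq n (mmul n (X 0) CX) idm"
    and Y: "holomorphic_on_disc n Y" "meq n (mmul n (Y 0) CY) idm"
    and PX_QY: "\<forall>l\<in>sphere 0 1. meq n (mmul n (P l) (X l)) (mmul n (Q l) (Y l))"
    and l: "l \<in> sphere 0 1" and m: "m \<in> sphere 0 1"
  shows "meq n (mmul n (ctr (Q l)) (P l)) (mmul n (ctr (Q m)) (P m))"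
proof -
  obtain R where degR: "\<forall>i\<in>{1..n}. \<forall>j\<in>{1..n}. degree (R i j) \<le> 2 * r"
    and R: "\<forall>l\<in>sphere 0 1. \<forall>i\<in>{1..n}. \<forall>j\<in>{1..n}. poly (R i j) l = l ^ r * mmul n (ctr (Q l)) (P l) i j"
    by (rule polynomial_loop_adjoint_mult[OF P(1) Q(1)])
  obtain R' where R': "\<forall>l\<in>sphere 0 1. \<forall>i\<in>{1..n}. \<forall>j\<in>{1..n}.
      poly (R' i j) l = l ^ r * mmul n (ctr (P l)) (Q l) i j"
    by (rule polynomial_loop_adjoint_mult[OF Q(1) P(1)])
  have low: "\<forall>i\<in>{1..n}. \<forall>j\<in>{1..n}. coeff (R i j) k = 0" if "k < r" for k
    using low_coeffs_eq_0_of_unitary_factorization[where P=P and Q=Q and X=X and Y=Y and R=R,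
        OF Q(2) X Y(1) PX_QY R that] .
  have low': "\<forall>i\<in>{1..n}. \<forall>j\<in>{1..n}. coeff (R' i j) k = 0" if "k < r" for k
    using PX_QY low_coeffs_eq_0_of_unitary_factorization[where P=Q and Q=P and X=Y and Y=X and R=R',
        OF P(2) Y X(1) _ R' that]
    by (simp add: meq_sym)
  \<comment> \<open>\<open>P\<^sup>* Q\<close> is the adjoint of \<open>Q\<^sup>* P\<close>, so \<open>R'\<close> is the conjugate reflection of \<open>R\<close>:
    the vanishing low coefficients of \<open>R'\<close> are the conjugated high coefficients of \<open>R\<close>.\<close>
  have R'_eq: "R' j i = conj_reflect (2 * r) (R i j)" if ij: "i \<in> {1..n}" "j \<in> {1..n}" for i j
  proof (rule poly_eq_if_eq_on_unit_sphere, intro ballI)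
    fix l :: complex assume l: "l \<in> sphere 0 1"
    have "poly (conj_reflect (2 * r) (R i j)) l = l ^ r * (l * cnj l) ^ r * cnj (mmul n (ctr (Q l)) (P l) i j)"
      using degR R l ij power_add[of l r r]
      by (simp add: poly_conj_reflect power_mult_distrib mult_ac flip: mult_2)
    also have "\<dots> = l ^ r * ctr (mmul n (ctr (Q l)) (P l)) j i"
      using unit_sphere_mult_cnj[OF l] by (simp add: ctr_def)
    also have "\<dots> = poly (R' j i) l"
      using R' l ij by (simp add: ctr_mmul)
    finally show "poly (R' j i) l = poly (conj_reflect (2 * r) (R i j)) l" ..
  qed
  have const: "mmul n (ctr (Q l)) (P l) i j = coeff (R i j) r"
    if "l \<in> sphere 0 1" "i \<in> {1..n}" "j \<in> {1..n}" for l i j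
  proof -
    have "poly (R i j) l = coeff (R i j) r * l ^ r"
      using degR low low' R'_eq that by (intro poly_eq_middle_monom_if_low_coeffs_vanish) auto
    then show ?thesis
      using R that by (auto simp: mult.commute)
  qed
  show ?thesis
    using const l m by (simp add: meq_def)
qed

section \<open>Canonical elements in dimension at most four\<close>

lemma canonical_xi_odd_imp_even_dim:
  assumes "canonical_xi n r xi" and "odd r"
  shows "even n"
proof (rule ccontr)
  assume "odd n"
  then obtain m where m: "n = 2 * m + 1"
    by (rule oddE)
  have "\<forall>i\<in>{1..n}. xi (n + 1 - i) = int r - xi i"
    using assms(1) unfolding canonical_xi_def by blast
  moreover have "m + 1 \<in> {1..n}" "n + 1 - (m + 1) = m + 1"
    using m by auto
  ultimately have "xi (m + 1) = int r - xi (m + 1)"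
    by metis
  then have "int r = 2 * xi (m + 1)"
    by simp
  then show False
    using assms(2) by (metis even_mult_iff even_numeral even_of_nat)
qed

lemma canonical_xi_gap:
  assumes xi: "canonical_xi n r xi" "n \<le> 4"
    and ij: "i \<in> {1..n}" "j \<in> {1..n}" and gap: "xi j + 1 < xi i"
  shows "i = 1 \<and> j = n \<and> (\<forall>k\<in>{2..<n}. xi k = xi n + 1)"
proof -
  have step: "xi k - xi k' \<in> {0, 1}" if "1 \<le> k" "k' = k + 1" "k' \<le> n" for k k'
    using xi(1) that unfolding canonical_xi_def by auto
  have ends: "xi 1 = int r" "xi n = 0"
    using xi(1) unfolding canonical_xi_def by auto
  have sym: "xi (n + 1 - k) = int r - xi k" if "k \<in> {1..n}" for k
    using xi(1) that unfolding canonical_xi_def by auto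
  have i: "i = 1 \<or> i = 2 \<or> i = 3 \<or> i = 4" and j: "j = 1 \<or> j = 2 \<or> j = 3 \<or> j = 4"
    using ij xi(2) by auto
  have "i \<noteq> j"
    using gap by auto
  then have "n = 2 \<or> n = 3 \<or> n = 4"
    using xi(2) ij by auto
  then show ?thesis
  proof (elim disjE)
    assume n: "n = 2"
    have "xi 1 - xi 2 \<in> {0, 1}"
      using step[of 1 2] n by simp
    then show ?thesis
      using ij gap n i j by auto
  next
    assume n: "n = 3"
    have "xi 1 - xi 2 \<in> {0, 1}" "xi 2 - xi 3 \<in> {0, 1}" "xi 2 = int r - xi 2"
      using step[of 1 2] step[of 2 3] sym[of 2] n by simp_all
    moreover have "{2..<n} = {2}"
      using n by auto
    ultimately show ?thesis
      using ends ij gap n i j by auto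
  next
    assume n: "n = 4"
    have d: "0 \<le> xi 1 - xi 2" "xi 1 - xi 2 \<le> 1" "0 \<le> xi 2 - xi 3" "xi 2 - xi 3 \<le> 1"
      "0 \<le> xi 3 - xi 4" "xi 3 - xi 4 \<le> 1" "xi 3 = int r - xi 2"
      using step[of 1 2] step[of 2 3] step[of 3 4] sym[of 2] n by auto
    have "odd r \<longrightarrow> xi 1 = xi 2"
    proof -
      have "odd r \<longrightarrow> 1 \<le> n div 2 - 1 \<longrightarrow> xi (n div 2 - 1) = xi (n div 2)"
        using xi(1) unfolding canonical_xi_def by blast
      moreover have "n div 2 - 1 = 1" "n div 2 = 2"
        using n by auto
      ultimately show ?thesis
        by (metis le_refl)
    qed
    then have "r \<noteq> 3"
      using d ends n by auto
    then have "r \<le> 2"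
      using d ends n by linarith
    moreover have "{2..<n} = {2, 3}"
      using n by auto
    ultimately show ?thesis
      using d ends ij gap n i j by auto
  qed
qed

lemma Amat_eq_Amat_0_if_small_gap:
  assumes "xi i \<le> xi j + 1"
  shows "Amat xi c z l i j = Amat xi c z 0 i j"
proof (cases "xi i \<le> xi j")
  case False
  then have "nat (xi i - xi j) = 1"
    using assms by linarith
  then show ?thesis
    using False by (simp add: Amat_def)
qed (simp add: Amat_def)

lemma Amat_constant:
  assumes xi: "canonical_xi n r xi" "n \<le> 4"
    and orth: "\<forall>l. meq n (mmul n (btr n (Amat xi c z l)) (Amat xi c z l)) idm"
  shows "meq n (Amat xi c z l) (Amat xi c z 0)"
  unfolding meq_def
proof (intro ballI)
  fix i j assume ij: "i \<in> {1..n}" "j \<in> {1..n}"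
  show "Amat xi c z l i j = Amat xi c z 0 i j"
  proof (cases "xi i \<le> xi j + 1")
    case False
    then have "xi j + 1 < xi i"
      by simp
    then have i: "i = 1" and j: "j = n" and mid: "\<forall>k\<in>{2..<n}. xi k = xi n + 1"
      using canonical_xi_gap[OF xi ij] by blast+
    define A where "A = Amat xi c z"
    define S where "S l = (\<Sum>k\<in>{2..<n}. A l (n + 1 - k) n * A l k n)" for l
    have "n \<noteq> 1"
      using False i j by auto
    have mid_const: "A l k n = A 0 k n" if "k \<in> {2..<n}" for l k
      unfolding A_def by (rule Amat_eq_Amat_0_if_small_gap) (use mid that in simp)
    have "S l = S 0" for l
      unfolding S_def
    proof (intro sum.cong refl)
      fix k assume k: "k \<in> {2..<n}"
      then have "n + 1 - k \<in> {2..<n}"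
        by auto
      with k show "A l (n + 1 - k) n * A l k n = A 0 (n + 1 - k) n * A 0 k n"
        using mid_const[of "n + 1 - k" l] mid_const[of k l] by (simp only:)
    qed
    moreover have "2 * A l 1 n + S l = 0" for l
    proof -
      have split: "{1..n} = insert 1 (insert n {2..<n})"
        using ij by auto
      have "A l n n = 1"
        by (simp add: A_def Amat_def idm_def)
      then have "mmul n (btr n (A l)) (A l) 1 n = 2 * A l 1 n + S l"
        using \<open>n \<noteq> 1\<close> unfolding mmul_def btr_def S_def split by simp
      moreover have "mmul n (btr n (A l)) (A l) 1 n = 0"
        using orth ij \<open>n \<noteq> 1\<close> by (auto simp: A_def meq_def idm_def)
      ultimately show ?thesis
        by simp
    qed
    ultimately have "2 * A l 1 n = 2 * A 0 1 n"
      by (metis add.right_neutral add_right_cancel)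
    then show ?thesis
      using i j by (simp add: A_def)
  qed (rule Amat_eq_Amat_0_if_small_gap)
qed

section \<open>\<open>S\<^sup>1\<close>-invariance\<close>

definition multiplicative_loop :: "nat \<Rightarrow> (complex \<Rightarrow> cmat) \<Rightarrow> bool" where
  "multiplicative_loop n L \<longleftrightarrow>
     (\<forall>l\<in>sphere 0 1. \<forall>m\<in>sphere 0 1. meq n (L (l * m)) (mmul n (L l) (L m)))"

lemma gamma_xi_1: "gamma_xi xi 1 = idm"
  by (simp add: gamma_xi_def idm_def fun_eq_iff)

lemma gamma_xi_mult: "meq n (gamma_xi xi (l * m)) (mmul n (gamma_xi xi l) (gamma_xi xi m))"
  by (simp add: meq_def mmul_def gamma_xi_def power_mult_distrib if_distrib[where f="\<lambda>x. x * _"] cong: if_cong)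

lemma mmul_gamma_xi_right_inverse:
  assumes "meq n (mmul n B C) idm" and \<mu>: "\<mu> \<in> sphere 0 1"
  shows "meq n (mmul n (mmul n B (gamma_xi xi \<mu>)) (mmul n (gamma_xi xi (cnj \<mu>)) C)) idm"
proof -
  have "meq n (mmul n (mmul n B (gamma_xi xi \<mu>)) (mmul n (gamma_xi xi (cnj \<mu>)) C))
      (mmul n B (mmul n (mmul n (gamma_xi xi \<mu>) (gamma_xi xi (cnj \<mu>))) C))"
    by (simp add: mmul_assoc)
  also have "meq n \<dots> (mmul n B (mmul n (gamma_xi xi (\<mu> * cnj \<mu>)) C))"
    by (rule mmul_cong[OF meq_refl mmul_cong[OF meq_sym[OF gamma_xi_mult] meq_refl]])
  also have "\<dots> = mmul n B (mmul n idm C)"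
    by (simp add: unit_sphere_mult_cnj[OF \<mu>] gamma_xi_1)
  also have "meq n \<dots> (mmul n B C)"
    by (rule mmul_cong[OF meq_refl mmul_idm_left])
  finally show ?thesis
    using assms(1) by (rule meq_trans)
qed

lemma gamma_factorization_translate:
  assumes LB: "\<forall>l\<in>sphere 0 1. meq n (mmul n A (gamma_xi xi l)) (mmul n (L l) (B l))"
    and l: "l \<in> sphere 0 1" and \<mu>: "\<mu> \<in> sphere 0 1"
  shows "meq n (mmul n (L (l * \<mu>)) (B (l * \<mu>))) (mmul n (L l) (mmul n (B l) (gamma_xi xi \<mu>)))"
proof -
  have "l * \<mu> \<in> sphere 0 1"
    using l \<mu> by (simp add: norm_mult)
  then have "meq n (mmul n (L (l * \<mu>)) (B (l * \<mu>))) (mmul n A (gamma_xi xi (l * \<mu>)))"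
    using LB by (simp add: meq_sym)
  also have "meq n \<dots> (mmul n A (mmul n (gamma_xi xi l) (gamma_xi xi \<mu>)))"
    by (rule mmul_cong[OF meq_refl gamma_xi_mult])
  also have "\<dots> = mmul n (mmul n A (gamma_xi xi l)) (gamma_xi xi \<mu>)"
    by (simp add: mmul_assoc)
  also have "meq n \<dots> (mmul n (mmul n (L l) (B l)) (gamma_xi xi \<mu>))"
    using LB l by (simp add: mmul_cong)
  also have "\<dots> = mmul n (L l) (mmul n (B l) (gamma_xi xi \<mu>))"
    by (simp add: mmul_assoc)
  finally show ?thesis .
qed

lemma multiplicative_loop_if_adjoint_translates:
  assumes based: "meq n (L 1) idm" and unitary: "\<forall>l\<in>sphere 0 1. unitary_mat n (L l)"
    and translate: "\<forall>l\<in>sphere 0 1. \<forall>m\<in>sphere 0 1. meq n (mmul n (ctr (L l)) (L (l * m))) (L m)"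
  shows "multiplicative_loop n L"
  unfolding multiplicative_loop_def
proof (intro ballI)
  fix l m :: complex assume l: "l \<in> sphere 0 1" and m: "m \<in> sphere 0 1"
  have cnj_l: "cnj l \<in> sphere 0 1"
    using l by simp
  \<comment> \<open>Translating by \<open>cnj l\<close> gives \<open>L (cnj l) = L l\<^sup>*\<close>, so \<open>L l\<^sup>*\<close> is also a right inverse.\<close>
  have "meq n (ctr (L l)) (mmul n (ctr (L l)) idm)"
    by (rule meq_sym[OF mmul_idm_right])
  also have "meq n \<dots> (mmul n (ctr (L l)) (L 1))"
    by (rule mmul_cong[OF meq_refl meq_sym[OF based]])
  also have "meq n \<dots> (L (cnj l))"
    using bspec[OF bspec[OF translate l] cnj_l] by (simp add: unit_sphere_mult_cnj[OF l])
  finally have adj: "meq n (ctr (L l)) (L (cnj l))" .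
  have "meq n (mmul n (L l) (ctr (L l))) (mmul n (ctr (L (cnj l))) (L (cnj l)))"
    using mmul_cong[OF ctr_cong[OF adj] adj] by simp
  also have "meq n \<dots> idm"
    using unitary cnj_l by (simp add: unitary_mat_def)
  finally have right_inv: "meq n (mmul n (L l) (ctr (L l))) idm" .
  have "meq n (L (l * m)) (mmul n idm (L (l * m)))"
    by (rule meq_sym[OF mmul_idm_left])
  also have "meq n \<dots> (mmul n (mmul n (L l) (ctr (L l))) (L (l * m)))"
    by (rule mmul_cong[OF meq_sym[OF right_inv] meq_refl])
  also have "\<dots> = mmul n (L l) (mmul n (ctr (L l)) (L (l * m)))"
    by (rule mmul_assoc)
  also have "meq n \<dots> (mmul n (L l) (L m))"
    using translate l m by (simp add: mmul_cong)
  finally show "meq n (L (l * m)) (mmul n (L l) (L m))" .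
qed

lemma based_unitary_factor_cong:
  assumes "based_unitary_factor n L Psi" and "\<forall>l\<in>sphere 0 1. meq n (Psi l) (Psi' l)"
  shows "based_unitary_factor n L Psi'"
proof -
  obtain B where "(\<forall>i\<in>{1..n}. \<forall>j\<in>{1..n}. (\<lambda>l. B l i j) holomorphic_on ball 0 1 \<and>
        continuous_on (cball 0 1) (\<lambda>l. B l i j))"
      "\<forall>l\<in>cball 0 1. \<exists>C. meq n (mmul n (B l) C) idm"
      and LB: "\<forall>l\<in>sphere 0 1. meq n (Psi l) (mmul n (L l) (B l))"
    using assms(1) unfolding based_unitary_factor_def by blast
  moreover have "\<forall>l\<in>sphere 0 1. meq n (Psi' l) (mmul n (L l) (B l))"
    using assms(2) LB by (blast intro: meq_trans[OF meq_sym])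
  ultimately show ?thesis
    unfolding based_unitary_factor_def by blast
qed

lemma multiplicative_loop_if_factor_gamma:
  assumes "in_OmegaR n r L" and "based_unitary_factor n L (\<lambda>l. mmul n A (gamma_xi xi l))"
  shows "multiplicative_loop n L"
proof -
  obtain C where coeffs: "\<forall>l\<in>sphere 0 1. meq n (L l) (\<lambda>i j. \<Sum>k\<le>r. l ^ k * C k i j)"
    and unitary: "\<forall>l\<in>sphere 0 1. unitary_mat n (L l)" and based: "meq n (L 1) idm"
    using assms(1) unfolding in_OmegaR_def by blast
  have poly: "polynomial_loop n r L"
    by (rule polynomial_loopI[OF coeffs])
  obtain B where B: "holomorphic_on_disc n B" and inv: "\<forall>l\<in>cball 0 1. \<exists>C. meq n (mmul n (B l) C) idm"
    and LB: "\<forall>l\<in>sphere 0 1. meq n (mmul n A (gamma_xi xi l)) (mmul n (L l) (B l))"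
    using assms(2) unfolding based_unitary_factor_def holomorphic_on_disc_def by blast
  obtain C0 where C0: "meq n (mmul n (B 0) C0) idm"
    using inv by fastforce
  have "meq n (mmul n (ctr (L l)) (L (l * \<mu>))) (L \<mu>)"
    if l: "l \<in> sphere 0 1" and \<mu>: "\<mu> \<in> sphere 0 1" for l \<mu>
  proof -
    have "\<forall>l\<in>sphere 0 1. unitary_mat n (L (l * \<mu>))"
      using unitary \<mu> by (simp add: norm_mult)
    moreover have "\<forall>l\<in>sphere 0 1.
        meq n (mmul n (L (l * \<mu>)) (B (l * \<mu>))) (mmul n (L l) (mmul n (B l) (gamma_xi xi \<mu>)))"
      using gamma_factorization_translate[OF LB _ \<mu>] by blast
    ultimately have "meq n (mmul n (ctr (L l)) (L (l * \<mu>))) (mmul n (ctr (L 1)) (L (1 * \<mu>)))"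
      using C0 l
      by (intro unitary_polynomial_loops_rigid[OF polynomial_loop_rotate[OF poly \<mu>] _ poly unitary
          holomorphic_on_disc_rotate[OF B \<mu>] _ holomorphic_on_disc_mmul_const[OF B]
          mmul_gamma_xi_right_inverse[OF C0 \<mu>]]) auto
    also have "meq n \<dots> (mmul n idm (L \<mu>))"
      using mmul_cong[OF ctr_cong[OF based] meq_refl] by simp
    also have "meq n \<dots> (L \<mu>)"
      by (rule mmul_idm_left)
    finally show ?thesis .
  qed
  then show ?thesis
    by (intro multiplicative_loop_if_adjoint_translates[OF based unitary] ballI)
qed

lemma multiplicative_loop_if_canonical_factor:
  assumes xi: "canonical_xi n r xi" "n \<le> 4" and loop: "in_OmegaR n r L"
    and orth: "\<forall>l. meq n (mmul n (btr n (Amat xi c z l)) (Amat xi c z l)) idm"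
    and factor: "based_unitary_factor n L (\<lambda>l. mmul n (Amat xi c z l) (gamma_xi xi l))"
  shows "multiplicative_loop n L"
proof -
  have "based_unitary_factor n L (\<lambda>l. mmul n (Amat xi c z 0) (gamma_xi xi l))"
    using factor by (rule based_unitary_factor_cong) (simp add: mmul_cong Amat_constant[OF xi orth])
  with loop show ?thesis
    by (rule multiplicative_loop_if_factor_gamma)
qed

lemma eventually_analytic_coeffs:
  fixes n :: nat and xi :: "nat \<Rightarrow> int"
    and c :: "nat \<Rightarrow> nat \<Rightarrow> nat \<Rightarrow> complex \<Rightarrow> complex"
  assumes "\<forall>i\<in>{1..n}. \<forall>j\<in>{1..n}. \<forall>k<nat (xi i - xi j). c i j k meromorphic_on M"
    and "open M" and "z \<in> M"
  shows "eventually (\<lambda>w. w \<in> M \<and>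
    (\<forall>i\<in>{1..n}. \<forall>j\<in>{1..n}. \<forall>k<nat (xi i - xi j). c i j k analytic_on {w})) (at z)"
proof -
  have "eventually (\<lambda>w. \<forall>i\<in>{1..n}. \<forall>j\<in>{1..n}. \<forall>k\<in>{..<nat (xi i - xi j)}.
      c i j k analytic_on {w}) (at z)"
    using assms(1,3) by (intro eventually_ball_finite ballI eventually_cosparse_imp_eventually_at
        meromorphic_on_imp_analytic_cosparse) auto
  moreover have "eventually (\<lambda>w. w \<in> M) (at z)"
    using eventually_at_in_open'[OF assms(2,3)] .
  ultimately show ?thesis
    by eventually_elim auto
qed

lemma cinf_isCont: "cinf M f \<Longrightarrow> z \<in> M \<Longrightarrow> isCont f z"
  by (erule cinf.cases) (auto intro: has_derivative_continuous)

lemma isCont_eventually_eq_imp_eq: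
  fixes f g :: "complex \<Rightarrow> complex"
  assumes "isCont f z" and "isCont g z" and "eventually (\<lambda>w. f w = g w) (at z)"
  shows "f z = g z"
proof -
  have "(g \<longlongrightarrow> f z) (at z)"
    using assms(1) tendsto_cong[OF assms(3)] by (simp add: isCont_def)
  then show ?thesis
    using assms(2) tendsto_unique[OF at_neq_bot] by (auto simp: isCont_def)
qed

lemma multiplicative_loop_at_limit:
  fixes Phi :: "complex \<Rightarrow> complex \<Rightarrow> cmat"
  assumes cont: "\<forall>l\<in>sphere 0 1. \<forall>i\<in>{1..n}. \<forall>j\<in>{1..n}. isCont (\<lambda>w. Phi w l i j) z"
    and ev: "eventually (\<lambda>w. multiplicative_loop n (Phi w)) (at z)"
  shows "multiplicative_loop n (Phi z)"
  unfolding multiplicative_loop_def meq_def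
proof (intro ballI)
  fix l m :: complex and i j
  assume l: "l \<in> sphere 0 1" and m: "m \<in> sphere 0 1" and ij: "i \<in> {1..n}" "j \<in> {1..n}"
  define f where "f w = Phi w (l * m) i j" for w
  define g where "g w = mmul n (Phi w l) (Phi w m) i j" for w
  have "l * m \<in> sphere 0 1"
    using l m by (simp add: norm_mult)
  then have "isCont f z"
    unfolding f_def using cont ij by blast
  moreover have "isCont g z"
    unfolding g_def mmul_def using cont l m ij by (intro isCont_sum ballI isCont_mult) auto
  moreover have "eventually (\<lambda>w. f w = g w) (at z)"
    using ev by eventually_elim (use l m ij in \<open>auto simp: multiplicative_loop_def meq_def f_def g_def\<close>)
  ultimately have "f z = g z"
    by (rule isCont_eventually_eq_imp_eq)
  then show "Phi z (l * m) i j = mmul n (Phi z l) (Phi z m) i j"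
    by (simp add: f_def g_def)
qed


section \<open>The harmonic map \<open>\<Phi>\<^sub>-\<^sub>1\<close>\<close>

lemma multiplicative_loop_minus_one:
  assumes "in_OmegaR n r L" and "multiplicative_loop n L"
  shows "meq n (mmul n (L (-1)) (L (-1))) idm" and "meq n (ctr (L (-1))) (L (-1))"
    and "meq n (btr n (L (-1))) (msc ((-1) ^ r) (L (-1)))"
proof -
  have minus_one: "(-1 :: complex) \<in> sphere 0 1"
    by simp
  have "meq n (mmul n (L (-1)) (L (-1))) (L ((-1) * (-1)))"
    using assms(2) minus_one unfolding multiplicative_loop_def by (blast intro: meq_sym)
  also have "meq n \<dots> idm"
    using assms(1) by (simp add: in_OmegaR_def)
  finally show square: "meq n (mmul n (L (-1)) (L (-1))) idm" .
  have "meq n (mmul n (ctr (L (-1))) (L (-1))) idm"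
    using assms(1) minus_one by (simp add: in_OmegaR_def unitary_mat_def)
  then show "meq n (ctr (L (-1))) (L (-1))"
    using square by (rule left_inverse_eq_right_inverse)
  have "meq n (btr n (L (-1))) (mmul n (btr n (L (-1))) (mmul n (L (-1)) (L (-1))))"
    using meq_trans[OF meq_sym[OF mmul_idm_right] mmul_cong[OF meq_refl meq_sym[OF square]]] .
  also have "\<dots> = mmul n (mmul n (btr n (L (-1))) (L (-1))) (L (-1))"
    by (simp add: mmul_assoc)
  also have "meq n \<dots> (mmul n (msc ((-1) ^ r) idm) (L (-1)))"
    using assms(1) minus_one by (intro mmul_cong meq_refl) (simp add: in_OmegaR_def)
  also have "meq n \<dots> (msc ((-1) ^ r) (L (-1)))"
    by (simp add: mmul_msc_left msc_cong mmul_idm_left)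
  finally show "meq n (btr n (L (-1))) (msc ((-1) ^ r) (L (-1)))" .
qed

lemma multiplicative_loop_mult_minus_one:
  assumes "multiplicative_loop n L" and "l \<in> sphere 0 1"
  shows "meq n (mmul n (L l) (L (-1))) (L (- l))"
proof -
  have "(-1 :: complex) \<in> sphere 0 1"
    by simp
  then have "meq n (L (l * -1)) (mmul n (L l) (L (-1)))"
    using assms unfolding multiplicative_loop_def by blast
  then show ?thesis
    by (simp add: meq_sym)
qed

lemma real_grassmannian_ptI:
  assumes square: "meq n (mmul n X X) idm" and herm: "meq n (ctr X) X" and sym: "meq n (btr n X) X"
  shows "real_grassmannian_pt n X"
proof -
  define P where "P i j = (X i j + idm i j) / 2" for i j
  have "meq n (ctr (btr n X)) X"
    using meq_trans[OF ctr_cong[OF sym] herm] .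
  then have real_X: "real_mat n X"
    by (simp add: real_mat_iff_meq)
  have "meq n (mmul n P P) P"
    unfolding meq_def
  proof (intro ballI)
    fix i j assume ij: "i \<in> {1..n}" "j \<in> {1..n}"
    have "mmul n P P i j = (mmul n X X i j + mmul n X idm i j + mmul n idm X i j + mmul n idm idm i j) / 4"
      by (simp add: mmul_def P_def sum.distrib field_simps flip: sum_divide_distrib)
    also have "\<dots> = (idm i j + X i j + X i j + idm i j) / 4"
      using ij square mmul_idm_left[of n X] mmul_idm_right[of n X] mmul_idm_left[of n idm]
      by (simp add: meq_def)
    also have "\<dots> = P i j"
      by (simp add: P_def field_simps)
    finally show "mmul n P P i j = P i j" .
  qed
  moreover have "meq n (ctr P) P"
    using herm by (auto simp: meq_def ctr_def P_def idm_def)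
  moreover have "real_mat n P"
    using real_X by (auto simp: real_mat_def P_def idm_def)
  moreover have "meq n (msc 1 X) (\<lambda>i j. 2 * P i j - idm i j)"
    by (simp add: meq_def P_def field_simps)
  ultimately show ?thesis
    unfolding real_grassmannian_pt_def by blast
qed

lemma orth_cx_structure_ptI:
  assumes square: "meq n (mmul n X X) idm" and herm: "meq n (ctr X) X" and skew: "meq n (btr n X) (msc (-1) X)"
  shows "orth_cx_structure_pt n X"
proof -
  define J where "J = msc \<i> X"
  have "meq n (msc (- \<i>) (ctr (btr n X))) (msc (- \<i>) (ctr (msc (-1) X)))"
    by (intro msc_cong ctr_cong skew)
  then have "meq n (ctr (btr n J)) (msc \<i> (ctr X))"
    by (simp add: J_def btr_msc ctr_msc)
  also have "meq n \<dots> J"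
    unfolding J_def by (rule msc_cong[OF herm])
  finally have "real_mat n J"
    by (simp add: real_mat_iff_meq)
  moreover have "meq n (mmul n J J) (msc (-1) idm)"
    unfolding J_def mmul_msc_left mmul_msc_right using msc_cong[OF square, of "-1"] by simp
  moreover have "meq n (mmul n (btr n J) J) idm"
  proof -
    have "meq n (mmul n (btr n J) J) (msc (\<i> * \<i>) (mmul n (btr n X) X))"
      by (simp add: J_def btr_msc mmul_msc_left mmul_msc_right mult.commute)
    also have "meq n \<dots> (msc (\<i> * \<i>) (mmul n (msc (-1) X) X))"
      by (rule msc_cong[OF mmul_cong[OF skew meq_refl]])
    also have "\<dots> = mmul n X X"
      by (simp add: mmul_msc_left)
    finally show ?thesis
      using square by (rule meq_trans)
  qed
  ultimately show ?thesis
    unfolding orth_cx_structure_pt_def J_def Let_def by (intro bexI[of _ 1]) simp_all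
qed

lemma real_grassmannian_pt_minus_one:
  assumes "in_OmegaR n r L" and "multiplicative_loop n L" and "even r"
  shows "real_grassmannian_pt n (L (-1))"
  using multiplicative_loop_minus_one[OF assms(1,2)] assms(3) by (intro real_grassmannian_ptI) simp_all

lemma orth_cx_structure_pt_minus_one:
  assumes "in_OmegaR n r L" and "multiplicative_loop n L" and "odd r"
  shows "orth_cx_structure_pt n (L (-1))"
  using multiplicative_loop_minus_one[OF assms(1,2)] assms(3) by (intro orth_cx_structure_ptI) simp_all

theorem proposition4p7:
  fixes n r :: nat and M :: "complex set" and Phi :: "complex \<Rightarrow> complex \<Rightarrow> cmat"
  assumes "open M" and "connected M" and "M \<noteq> {}"
    and "1 \<le> n" and "n \<le> 4"
    and "ext_sol n r M Phi"
    and "canonical_type n r M Phi"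
  shows "S1_invariant n M Phi \<and>
         (\<forall>z\<in>M. \<forall>l\<in>sphere 0 1. meq n (mmul n (Phi z l) (Phi z (-1))) (Phi z (- l))) \<and>
         (even r \<longrightarrow> (\<forall>z\<in>M. real_grassmannian_pt n (Phi z (-1)))) \<and>
         (odd r \<longrightarrow> (\<exists>m. n = 2 * m) \<and> (\<forall>z\<in>M. orth_cx_structure_pt n (Phi z (-1))))"
proof -
  have loops: "\<forall>z\<in>M. in_OmegaR n r (Phi z)"
    and smooth: "\<forall>l\<in>sphere 0 1. \<forall>i\<in>{1..n}. \<forall>j\<in>{1..n}. cinf M (\<lambda>z. Phi z l i j)"
    using assms(6) unfolding ext_sol_def by blast+
  obtain xi c where xi: "canonical_xi n r xi"
    and mero: "\<forall>i\<in>{1..n}. \<forall>j\<in>{1..n}. \<forall>k<nat (xi i - xi j). c i j k meromorphic_on M"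
    and factor: "\<forall>z\<in>M. (\<forall>i\<in>{1..n}. \<forall>j\<in>{1..n}. \<forall>k<nat (xi i - xi j). c i j k analytic_on {z}) \<longrightarrow>
           (\<forall>l. meq n (mmul n (btr n (Amat xi c z l)) (Amat xi c z l)) idm) \<and>
           based_unitary_factor n (Phi z) (\<lambda>l. mmul n (Amat xi c z l) (gamma_xi xi l))"
    using assms(7) unfolding canonical_type_def by blast
  have hom: "multiplicative_loop n (Phi z)" if z: "z \<in> M" for z
  proof (rule multiplicative_loop_at_limit)
    show "\<forall>l\<in>sphere 0 1. \<forall>i\<in>{1..n}. \<forall>j\<in>{1..n}. isCont (\<lambda>w. Phi w l i j) z"
      using smooth z by (blast intro: cinf_isCont)
    show "eventually (\<lambda>w. multiplicative_loop n (Phi w)) (at z)"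
      using eventually_analytic_coeffs[OF mero assms(1) z]
      by eventually_elim (use factor loops in \<open>blast intro: multiplicative_loop_if_canonical_factor[OF xi assms(5)]\<close>)
  qed
  have "S1_invariant n M Phi"
    using hom unfolding S1_invariant_def multiplicative_loop_def by blast
  moreover have "\<forall>z\<in>M. \<forall>l\<in>sphere 0 1. meq n (mmul n (Phi z l) (Phi z (-1))) (Phi z (- l))"
    using hom by (blast intro: multiplicative_loop_mult_minus_one)
  moreover have "even r \<longrightarrow> (\<forall>z\<in>M. real_grassmannian_pt n (Phi z (-1)))"
    using hom loops by (blast intro: real_grassmannian_pt_minus_one)
  moreover have "odd r \<longrightarrow> (\<exists>m. n = 2 * m) \<and> (\<forall>z\<in>M. orth_cx_structure_pt n (Phi z (-1)))"
    using hom loops canonical_xi_odd_imp_even_dim[OF xi] by (blast intro: orth_cx_structure_pt_minus_one)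
  ultimately show ?thesis
    by blast
qed

end
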